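(* Let $\psi:\mathbb{R}\to\mathbb{R}$ satisfy $|\psi(x)|\leq C(1+|x|)^{-1-\varepsilon}$ for all $x\in\mathbb{R}$, for some constants $C,\varepsilon>0$. Let $\{a_I:I\in\mathcal{D}\}$ be independent random variables on $(\Omega,\mathscr{F},\mathscr{P})$ with $a_I\in\mathscr{G}(\nu)$ for every $I$, for some fixed $\nu>0$, and with $\sum_{I\in\mathcal{D}}\mathscr{E}|a_I|<\infty$. Then for every $x\neq y$ in $\mathbb{R}$, the series $$K(x,y;\omega)=\sum_{I\in\mathcal{D}}a_I(\omega)\psi_I(x)\psi_I(y)$$ converges for $\mathscr{P}$-almost every $\omega\in\Omega$.
   Context: $\mathcal{D}=\bigcup_{j\in\mathbb{Z}}\mathcal{D}^j$ is the family of dyadic intervals of $\mathbb{R}$, $\mathcal{D}^j=\{I^j_k=[k2^{-j},(k+1)2^{-j}):k\in\mathbb{Z}\}$. For $I=I^j_k$, $\psi_I(x)=2^{j/2}\psi(2^jx-k)$. For an integrable random variable $X$, $\eta_{X-\mathscr{E}X}(\lambda)=\log \mathscr{E}e^{\lambda(X-\mathscr{E}X)}$, and $X\in\mathscr{G}(\nu)$ means $X$ is integrable and $\eta_{X-\mathscr{E}X}(\lambda)\leq \lambda^2\nu/2$ for all $\lambda\in\mathbb{R}$. (The series is understood along any fixed enumeration of $\mathcal{D}$.) *)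

theory Defs
  imports "HOL-Probability.Probability"
begin

text \<open>Dyadic interval I^j_k = [k 2^-j, (k+1) 2^-j) is indexed by the pair (j,k) of integers.
  psi_I(x) = 2^(j/2) psi(2^j x - k).\<close>
definition dyadic_psi :: "(real \<Rightarrow> real) \<Rightarrow> int \<times> int \<Rightarrow> real \<Rightarrow> real" where
  "dyadic_psi \<psi> I x = (case I of (j, k) \<Rightarrow> 2 powr (real_of_int j / 2) * \<psi> (2 powr real_of_int j * x - real_of_int k))"

definition subgaussian_class :: "'a measure \<Rightarrow> real \<Rightarrow> ('a \<Rightarrow> real) \<Rightarrow> bool" where
  "subgaussian_class M \<nu> X \<longleftrightarrow>
     integrable M X \<and>
     (\<forall>t::real. integrable M (\<lambda>\<omega>. exp (t * (X \<omega> - integral\<^sup>L M X))) \<and>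
        ln (integral\<^sup>L M (\<lambda>\<omega>. exp (t * (X \<omega> - integral\<^sup>L M X)))) \<le> t\<^sup>2 * \<nu> / 2)"

end

theory Submission
  imports Defs
begin

text \<open>For x \<noteq> y the products psi_I(x) psi_I(y) are bounded uniformly in I by C^2 / |x - y|:
  at scale 2^j the points 2^j x - k and 2^j y - k are 2^j |x - y| apart, so the decay of psi
  (already the rate 1/(1 + |u|) suffices) absorbs the normalisation factor 2^j.
  Since the sum of E|a_I| is finite, monotone convergence makes the sum of |a_I(omega)| finite
  almost surely, and the series then converges absolutely by comparison.\<close>

lemma abs_le_divide_one_plus_abs_if_decay:
  fixes \<psi> :: "real \<Rightarrow> real" and C \<epsilon> :: real
  assumes "C \<ge> 0" "\<epsilon> \<ge> 0" "\<And>x. \<bar>\<psi> x\<bar> \<le> C * (1 + \<bar>x\<bar>) powr (- 1 - \<epsilon>)"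
  shows "\<bar>\<psi> u\<bar> \<le> C / (1 + \<bar>u\<bar>)"
proof -
  have "(1 + \<bar>u\<bar>) powr (- 1 - \<epsilon>) \<le> (1 + \<bar>u\<bar>) powr (-1)"
    by (rule powr_mono) (use assms(2) in auto)
  also have "\<dots> = 1 / (1 + \<bar>u\<bar>)"
    by (simp add: powr_minus_divide)
  finally show ?thesis
    using assms(3)[of u] mult_left_mono[OF _ assms(1)] by fastforce
qed

lemma scaled_decay_product_le:
  fixes t x y k :: real
  assumes "t > 0" "x \<noteq> y"
  shows "t / ((1 + \<bar>t * x - k\<bar>) * (1 + \<bar>t * y - k\<bar>)) \<le> 1 / \<bar>x - y\<bar>"
proof -
  define u v where "u = t * x - k" and "v = t * y - k"
  have "t * \<bar>x - y\<bar> = \<bar>u - v\<bar>"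
    using assms(1) by (simp add: u_def v_def abs_mult flip: right_diff_distrib)
  also have "\<dots> \<le> (1 + \<bar>u\<bar>) * (1 + \<bar>v\<bar>)"
    by (simp add: algebra_simps) (smt (verit) mult_nonneg_nonneg abs_ge_zero)
  finally have "t * \<bar>x - y\<bar> \<le> (1 + \<bar>u\<bar>) * (1 + \<bar>v\<bar>)" .
  moreover have "0 < (1 + \<bar>u\<bar>) * (1 + \<bar>v\<bar>)" "\<bar>x - y\<bar> > 0"
    using assms(2) by (auto intro: mult_pos_pos add_pos_nonneg)
  ultimately show ?thesis
    unfolding u_def v_def by (simp add: divide_simps mult.commute)
qed

lemma abs_dyadic_psi_mult_le:
  fixes \<psi> :: "real \<Rightarrow> real" and C :: real
  assumes "C \<ge> 0" "\<And>u. \<bar>\<psi> u\<bar> \<le> C / (1 + \<bar>u\<bar>)" "x \<noteq> y"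
  shows "\<bar>dyadic_psi \<psi> I x * dyadic_psi \<psi> I y\<bar> \<le> C\<^sup>2 / \<bar>x - y\<bar>"
proof -
  obtain j k where I: "I = (j, k)"
    by (cases I)
  define t where "t = 2 powr real_of_int j"
  define u v where "u = t * x - real_of_int k" and "v = t * y - real_of_int k"
  have t_pos: "t > 0"
    by (simp add: t_def)
  have "2 powr (real_of_int j / 2) * 2 powr (real_of_int j / 2) = t"
    by (simp add: t_def flip: powr_add)
  then have "\<bar>dyadic_psi \<psi> I x * dyadic_psi \<psi> I y\<bar> = t * (\<bar>\<psi> u\<bar> * \<bar>\<psi> v\<bar>)"
    using t_pos by (simp add: dyadic_psi_def I u_def v_def t_def abs_mult algebra_simps)
  also have "\<dots> \<le> t * (C / (1 + \<bar>u\<bar>) * (C / (1 + \<bar>v\<bar>)))"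
    using t_pos assms(1) by (intro mult_left_mono mult_mono assms(2)) auto
  also have "\<dots> = C\<^sup>2 * (t / ((1 + \<bar>u\<bar>) * (1 + \<bar>v\<bar>)))"
    by (simp add: power2_eq_square)
  also have "\<dots> \<le> C\<^sup>2 * (1 / \<bar>x - y\<bar>)"
    unfolding u_def v_def by (intro mult_left_mono scaled_decay_product_le t_pos assms(3)) auto
  finally show ?thesis
    by simp
qed

lemma summable_comp_bij_if_summable_on_nonneg:
  fixes f :: "'a \<Rightarrow> real" and e :: "nat \<Rightarrow> 'a"
  assumes "f summable_on UNIV" "bij e" "\<And>z. f z \<ge> 0"
  shows "summable (\<lambda>n. f (e n))"
proof -
  have "(f \<circ> e) summable_on UNIV"
    using summable_on_reindex_bij_betw[of e UNIV UNIV f] assms(1,2)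
    by (simp add: bij_betw_def bij_def comp_def)
  then show ?thesis
    using assms(3) by (subst summable_on_UNIV_nonneg_real_iff[symmetric]) (auto simp: comp_def)
qed

lemma AE_summable_abs_if_summable_integral_abs:
  fixes X :: "nat \<Rightarrow> 'a \<Rightarrow> real"
  assumes "\<And>n. integrable M (X n)" "summable (\<lambda>n. \<integral>\<omega>. \<bar>X n \<omega>\<bar> \<partial>M)"
  shows "AE \<omega> in M. summable (\<lambda>n. \<bar>X n \<omega>\<bar>)"
proof -
  have "(\<integral>\<^sup>+ \<omega>. (\<Sum>n. ennreal \<bar>X n \<omega>\<bar>) \<partial>M) = (\<Sum>n. \<integral>\<^sup>+ \<omega>. ennreal \<bar>X n \<omega>\<bar> \<partial>M)"
    using assms(1) by (intro nn_integral_suminf) auto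
  also have "\<dots> = (\<Sum>n. ennreal (\<integral>\<omega>. \<bar>X n \<omega>\<bar> \<partial>M))"
    by (intro arg_cong[where f=suminf] ext nn_integral_eq_integral integrable_abs assms(1)) auto
  also have "\<dots> = ennreal (\<Sum>n. \<integral>\<omega>. \<bar>X n \<omega>\<bar> \<partial>M)"
    using assms(2) by (intro suminf_ennreal2) auto
  finally have "(\<integral>\<^sup>+ \<omega>. (\<Sum>n. ennreal \<bar>X n \<omega>\<bar>) \<partial>M) \<noteq> \<infinity>"
    by simp
  then have "AE \<omega> in M. (\<Sum>n. ennreal \<bar>X n \<omega>\<bar>) \<noteq> \<infinity>"
    using assms(1) by (intro nn_integral_PInf_AE) auto
  then show ?thesis
    by eventually_elim (auto intro: summable_suminf_not_top)
qed

lemma summable_mult_bounded_if_summable_abs: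
  fixes a b :: "nat \<Rightarrow> real"
  assumes "summable (\<lambda>n. \<bar>a n\<bar>)" "\<And>n. \<bar>b n\<bar> \<le> B"
  shows "summable (\<lambda>n. a n * b n)"
proof (rule summable_comparison_test)
  show "summable (\<lambda>n. \<bar>a n\<bar> * B)"
    using assms(1) by (rule summable_mult2)
  show "\<exists>N. \<forall>n\<ge>N. norm (a n * b n) \<le> \<bar>a n\<bar> * B"
    using assms(2) by (auto simp: abs_mult intro!: mult_left_mono)
qed

theorem theorem3p1:
  fixes M :: "'a measure" and \<psi> :: "real \<Rightarrow> real" and C \<epsilon> \<nu> :: real
    and a :: "int \<times> int \<Rightarrow> 'a \<Rightarrow> real"
  assumes "prob_space M"
    and "C > 0" and "\<epsilon> > 0"
    and "\<And>x. \<bar>\<psi> x\<bar> \<le> C * (1 + \<bar>x\<bar>) powr (- 1 - \<epsilon>)"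
    and "\<And>I. a I \<in> borel_measurable M"
    and "prob_space.indep_vars M (\<lambda>_. borel) a UNIV"
    and "\<nu> > 0"
    and "\<And>I. subgaussian_class M \<nu> (a I)"
    and "(\<lambda>I. integral\<^sup>L M (\<lambda>\<omega>. \<bar>a I \<omega>\<bar>)) summable_on UNIV"
  shows "\<forall>x y (e :: nat \<Rightarrow> int \<times> int). x \<noteq> y \<and> bij e \<longrightarrow>
           (AE \<omega> in M. summable (\<lambda>n. a (e n) \<omega> * dyadic_psi \<psi> (e n) x * dyadic_psi \<psi> (e n) y))"
proof (intro allI impI, elim conjE)
  fix x y :: real and e :: "nat \<Rightarrow> int \<times> int"
  assume "x \<noteq> y" and "bij e"
  have integrable: "integrable M (a I)" for I
    using assms(8) by (simp add: subgaussian_class_def)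
  have "summable (\<lambda>n. \<integral>\<omega>. \<bar>a (e n) \<omega>\<bar> \<partial>M)"
    using assms(9) \<open>bij e\<close> by (rule summable_comp_bij_if_summable_on_nonneg) simp
  then have "AE \<omega> in M. summable (\<lambda>n. \<bar>a (e n) \<omega>\<bar>)"
    using integrable by (intro AE_summable_abs_if_summable_integral_abs)
  moreover have bounded: "\<bar>dyadic_psi \<psi> I x * dyadic_psi \<psi> I y\<bar> \<le> C\<^sup>2 / \<bar>x - y\<bar>" for I
    using assms(2,3) \<open>x \<noteq> y\<close>
    by (intro abs_dyadic_psi_mult_le abs_le_divide_one_plus_abs_if_decay[OF _ _ assms(4)]) auto
  ultimately show "AE \<omega> in M. summable (\<lambda>n. a (e n) \<omega> * dyadic_psi \<psi> (e n) x * dyadic_psi \<psi> (e n) y)"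
    unfolding mult.assoc by (elim eventually_mono summable_mult_bounded_if_summable_abs) (rule bounded)
qed

end
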